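(* Let $f:\mathbb{R}^d\to\mathbb{R}$ be differentiable, bounded below by some $f^*$, with $L$-Lipschitz continuous gradient $\nabla f$. Let $\{x_t\}$ be generated by the SUM iteration with $\mu\in[0,1)$, $\lambda\in[0,1/(1-\mu)]$, and positive step sizes $\{\eta_t\}$ satisfying $\sum_{t=1}^\infty\eta_t=\infty$, $\sum_{t=1}^\infty\eta_t^2<\infty$ and $\lim_{t\to\infty}\eta_{t-1}/\eta_t=1$. Assume the noisy gradients satisfy $\mathbb{E}_t[g_t]=\nabla f(x_t)$ and $\mathbb{E}\|g_t\|^2\le G^2$ for all $t$. Then $$\lim_{t\to\infty}\mathbb{E}\|\nabla f(x_t)\|=0\qquad\text{and}\qquad \lim_{t\to\infty}\mathbb{E}[f(x_t)]=F^*$$ for some finite constant $F^*$.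
   Context: Stochastic unified momentum (SUM) iteration: given $x_1\in\mathbb{R}^d$, set $m_0=0$ and for $t=1,2,\dots$ $$m_t=\mu m_{t-1}-\eta_t g_t,\qquad x_{t+1}=x_t-\lambda\eta_t g_t+(1-\tilde\lambda)m_t,\qquad \tilde\lambda:=(1-\mu)\lambda,$$ where $g_t\in\mathbb{R}^d$ is a random vector (noisy gradient). $\mathbb{E}_t[\cdot]$ denotes the conditional expectation given $g_1,\dots,g_{t-1}$ (so $x_t$ and $m_{t-1}$ are determined by the conditioning), and $\mathbb{E}$ the total expectation. Norms are Euclidean. ($\lambda=0$ gives stochastic heavy ball, $\lambda=1$ stochastic Nesterov accelerated gradient.) *)

theory Defs
  imports "HOL-Probability.Probability"
begin

text \<open>One realization of the SUM recursion. sum_xm mu lam eta x1 g t = (x_(t+1), m_t),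
  with x_1 = x1, m_0 = 0, and steps indexed from 1.\<close>
primrec sum_xm :: "real \<Rightarrow> real \<Rightarrow> (nat \<Rightarrow> real) \<Rightarrow> 'v::real_vector \<Rightarrow> (nat \<Rightarrow> 'v) \<Rightarrow> nat \<Rightarrow> 'v \<times> 'v" where
  "sum_xm mu lam eta x1 g 0 = (x1, 0)"
| "sum_xm mu lam eta x1 g (Suc t) =
     (let xm = sum_xm mu lam eta x1 g t;
          m' = mu *\<^sub>R snd xm - eta (Suc t) *\<^sub>R g (Suc t);
          x' = fst xm - (lam * eta (Suc t)) *\<^sub>R g (Suc t) + (1 - (1 - mu) * lam) *\<^sub>R m'
      in (x', m'))"

text \<open>The iterate x_t (t >= 1); for t = 0 it returns x_1 (irrelevant).\<close>
definition sum_x :: "real \<Rightarrow> real \<Rightarrow> (nat \<Rightarrow> real) \<Rightarrow> 'v::real_vector \<Rightarrow> (nat \<Rightarrow> 'v) \<Rightarrow> nat \<Rightarrow> 'v" where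
  "sum_x mu lam eta x1 g t = fst (sum_xm mu lam eta x1 g (t - 1))"

definition hist :: "'a measure \<Rightarrow> (nat \<Rightarrow> 'a \<Rightarrow> 'v::topological_space) \<Rightarrow> nat \<Rightarrow> 'a measure" where
  "hist M g t = sigma (space M) {g i -` A \<inter> space M | i A. i \<in> {1..<t} \<and> A \<in> sets borel}"

end

theory Submission
  imports Defs
begin

text \<open>
  With c = mu (1 - (1 - mu) lam) / (1 - mu), the shifted iterate z = x + c m moves like plain SGD,
  z_(t+1) = z_t - eta_t / (1 - mu) g_t, while E |m_t|^2 satisfies the contraction
  E |m_(t+1)|^2 \<le> mu E |m_t|^2 + eta_t^2 G^2 / (1 - mu) and is therefore summable.
  The descent lemma along z, unbiasedness (to trade g_t for \<nabla>f(x_t)) and Lipschitz continuity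
  (to trade \<nabla>f(x_t) for \<nabla>f(z_t) at the price of E |m_t|^2) give
  E f(z_(t+1)) \<le> E f(z_t) - eta_t / (2 (1 - mu)) E |\<nabla>f(z_t)|^2 + r_t with r summable.
  Hence E f(z_t) converges and the sum of eta_t E |\<nabla>f(z_t)|^2 is finite. As E |\<nabla>f(z_t)|
  changes by O(eta_t) per step while the sum of eta_t diverges, it tends to 0. Finally x_t - z_t = -c m_t
  with E |m_t|^2 \<rightarrow> 0 transfers both limits from z_t to x_t.
\<close>

lemma young_ineq_weighted:
  fixes p q s :: real
  assumes "s > 0"
  shows "p * q \<le> s * p\<^sup>2 / 2 + q\<^sup>2 / (2 * s)"
proof -
  have "0 \<le> (s * p - q)\<^sup>2 / s" using assms by simp
  also have "(s * p - q)\<^sup>2 / s = s * p\<^sup>2 - 2 * p * q + q\<^sup>2 / s"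
    using assms by (simp add: power2_eq_square field_simps)
  finally show ?thesis using assms by (simp add: field_simps)
qed

lemma square_add_le: "((a::real) + b)\<^sup>2 \<le> 2 * a\<^sup>2 + 2 * b\<^sup>2"
  using sum_squares_ge_zero[of "a - b" 0] by (simp add: power2_eq_square algebra_simps)

lemma square_convex_combination_le:
  fixes A B mu :: real
  assumes "0 \<le> mu" "mu < 1"
  shows "(mu * A + B)\<^sup>2 \<le> mu * A\<^sup>2 + B\<^sup>2 / (1 - mu)"
proof -
  have "(1 - mu) * (mu * A\<^sup>2 + B\<^sup>2 / (1 - mu) - (mu * A + B)\<^sup>2) = mu * ((1 - mu) * A - B)\<^sup>2"
    using assms by (simp add: field_simps power2_eq_square)
  also have "\<dots> \<ge> 0" using assms by simp
  finally show ?thesis using assms by (simp add: zero_le_mult_iff)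
qed

lemma lipschitz_gradient_remainder_le:
  fixes f :: "'v::euclidean_space \<Rightarrow> real"
  assumes grad: "\<And>x. (f has_derivative (\<lambda>h. f' x \<bullet> h)) (at x)"
    and lip: "\<And>x y. norm (f' x - f' y) \<le> K * norm (x - y)"
  shows "\<bar>f y - f x - f' x \<bullet> (y - x)\<bar> \<le> K / 2 * (norm (y - x))\<^sup>2"
proof -
  define d where "d = y - x"
  have D: "((\<lambda>s. f (x + s *\<^sub>R d)) has_real_derivative (f' (x + s *\<^sub>R d) \<bullet> d)) (at s)" for s
  proof -
    have "((\<lambda>s. x + s *\<^sub>R d) has_derivative (\<lambda>h. h *\<^sub>R d)) (at s)"
      by (auto intro!: derivative_eq_intros)
    from has_derivative_compose[OF this grad]
    show ?thesis
      by (simp add: has_real_derivative_iff_has_vector_derivative has_vector_derivative_def mult.commute)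
  qed
  have slope: "\<bar>(f' (x + s *\<^sub>R d) - f' x) \<bullet> d\<bar> \<le> K * s * (norm d)\<^sup>2" if "s \<ge> 0" for s
  proof -
    have "\<bar>(f' (x + s *\<^sub>R d) - f' x) \<bullet> d\<bar> \<le> norm (f' (x + s *\<^sub>R d) - f' x) * norm d"
      by (rule Cauchy_Schwarz_ineq2)
    also have "\<dots> \<le> K * norm (s *\<^sub>R d) * norm d"
      using lip[of "x + s *\<^sub>R d" x] by (simp add: mult_right_mono)
    finally show ?thesis using that by (simp add: power2_eq_square mult.assoc)
  qed
  text \<open>Both signs of the bound come from the mean value theorem for f on the segment,
    corrected by the quadratic K s^2 |d|^2 / 2.\<close>
  define p where "p = (\<lambda>s. f (x + s *\<^sub>R d) - s * (f' x \<bullet> d) - K / 2 * s\<^sup>2 * (norm d)\<^sup>2)"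
  define q where "q = (\<lambda>s. f (x + s *\<^sub>R d) - s * (f' x \<bullet> d) + K / 2 * s\<^sup>2 * (norm d)\<^sup>2)"
  have Dp: "(p has_real_derivative (f' (x + s *\<^sub>R d) \<bullet> d - f' x \<bullet> d - K * s * (norm d)\<^sup>2)) (at s)" for s
    unfolding p_def by (rule derivative_eq_intros D refl | simp)+
  have Dq: "(q has_real_derivative (f' (x + s *\<^sub>R d) \<bullet> d - f' x \<bullet> d + K * s * (norm d)\<^sup>2)) (at s)" for s
    unfolding q_def by (rule derivative_eq_intros D refl | simp)+
  obtain z where z: "0 < z" "z < 1"
    "p 1 - p 0 = (1 - 0) * (f' (x + z *\<^sub>R d) \<bullet> d - f' x \<bullet> d - K * z * (norm d)\<^sup>2)"
    using MVT2[of 0 1 p "\<lambda>s. f' (x + s *\<^sub>R d) \<bullet> d - f' x \<bullet> d - K * s * (norm d)\<^sup>2"] Dp by auto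
  obtain w where w: "0 < w" "w < 1"
    "q 1 - q 0 = (1 - 0) * (f' (x + w *\<^sub>R d) \<bullet> d - f' x \<bullet> d + K * w * (norm d)\<^sup>2)"
    using MVT2[of 0 1 q "\<lambda>s. f' (x + s *\<^sub>R d) \<bullet> d - f' x \<bullet> d + K * s * (norm d)\<^sup>2"] Dq by auto
  have "p 1 \<le> p 0" using z slope[of z] by (simp add: inner_diff_left)
  moreover have "q 1 \<ge> q 0" using w slope[of w] by (simp add: inner_diff_left)
  ultimately have "f y - f x - f' x \<bullet> (y - x) \<le> K / 2 * (norm (y - x))\<^sup>2
      \<and> -(f y - f x - f' x \<bullet> (y - x)) \<le> K / 2 * (norm (y - x))\<^sup>2"
    unfolding p_def q_def d_def by simp
  then show ?thesis by (simp only: abs_le_iff)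
qed

lemma lipschitz_gradient_norm_sq_le:
  fixes f :: "'v::euclidean_space \<Rightarrow> real"
  assumes grad: "\<And>x. (f has_derivative (\<lambda>h. f' x \<bullet> h)) (at x)"
    and lip: "\<And>x y. norm (f' x - f' y) \<le> K * norm (x - y)"
    and K: "K > 0" and lower: "\<And>x. fstar \<le> f x"
  shows "(norm (f' x))\<^sup>2 \<le> 2 * K * (f x - fstar)"
proof -
  define y where "y = x - (1 / K) *\<^sub>R f' x"
  have "f y \<le> f x + f' x \<bullet> (y - x) + K / 2 * (norm (y - x))\<^sup>2"
    using lipschitz_gradient_remainder_le[OF grad lip, of y x] by linarith
  also have "\<dots> = f x - (norm (f' x))\<^sup>2 / (2 * K)"
    using K unfolding y_def by (simp add: dot_square_norm power2_eq_square field_simps)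
  finally have "fstar \<le> f x - (norm (f' x))\<^sup>2 / (2 * K)" using lower[of y] by linarith
  thus ?thesis using K by (simp add: field_simps)
qed

lemma almost_decreasing_convergent:
  fixes a r :: "nat \<Rightarrow> real"
  assumes step: "\<And>k. a (Suc k) \<le> a k + r k" and r_nonneg: "\<And>k. r k \<ge> 0"
    and r_summable: "summable r" and lower: "\<And>k. lb \<le> a k"
  shows "convergent a"
proof -
  define b where "b = (\<lambda>k. a k - (\<Sum>i<k. r i))"
  have "decseq b" unfolding b_def
    by (rule decseq_SucI) (use step in \<open>simp add: algebra_simps\<close>)
  moreover have "lb - suminf r \<le> b k" for k
  proof -
    have "(\<Sum>i<k. r i) \<le> suminf r" using r_summable r_nonneg by (intro sum_le_suminf) auto
    thus ?thesis unfolding b_def using lower[of k] by linarith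
  qed
  ultimately obtain l where "b \<longlonglongrightarrow> l" using decseq_convergent by blast
  hence "(\<lambda>k. b k + (\<Sum>i<k. r i)) \<longlonglongrightarrow> l + suminf r"
    by (intro tendsto_add summable_LIMSEQ r_summable)
  thus ?thesis unfolding b_def convergent_def by auto
qed

lemma perturbed_descent_summable_convergent:
  fixes a w r :: "nat \<Rightarrow> real"
  assumes step: "\<And>k. a (Suc k) \<le> a k - w k + r k" and w_nonneg: "\<And>k. w k \<ge> 0"
    and r_nonneg: "\<And>k. r k \<ge> 0" and r_summable: "summable r" and lower: "\<And>k. lb \<le> a k"
  shows "summable w" "convergent a"
proof -
  have partial: "(\<Sum>k\<le>n. w k) \<le> a 0 - a (Suc n) + (\<Sum>k\<le>n. r k)" for n
  proof (induction n)
    case 0 thus ?case using step[of 0] by simp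
  next
    case (Suc n) thus ?case using step[of "Suc n"] by simp
  qed
  have "(\<Sum>k\<le>n. w k) \<le> a 0 - lb + suminf r" for n
  proof -
    have "(\<Sum>k\<le>n. r k) \<le> suminf r" using r_summable r_nonneg by (intro sum_le_suminf) auto
    thus ?thesis using partial[of n] lower[of "Suc n"] by linarith
  qed
  thus "summable w" by (rule bounded_imp_summable[OF w_nonneg])
  show "convergent a"
  proof (rule almost_decreasing_convergent[OF _ r_nonneg r_summable lower])
    show "a (Suc k) \<le> a k + r k" for k using step[of k] w_nonneg[of k] by linarith
  qed
qed

lemma contraction_recursion_summable:
  fixes V b :: "nat \<Rightarrow> real"
  assumes step: "\<And>k. V (Suc k) \<le> mu * V k + b k" and V_nonneg: "\<And>k. V k \<ge> 0"
    and mu: "0 \<le> mu" "mu < 1" and b_nonneg: "\<And>k. b k \<ge> 0" and b_summable: "summable b"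
  shows "summable V"
proof -
  have "summable (\<lambda>k. (1 - mu) * V k)"
  proof (rule perturbed_descent_summable_convergent(1)[of V _ b 0])
    show "V (Suc k) \<le> V k - (1 - mu) * V k + b k" for k using step[of k] by (simp add: algebra_simps)
    show "0 \<le> (1 - mu) * V k" for k using V_nonneg[of k] mu by simp
  qed (use V_nonneg b_nonneg b_summable in auto)
  hence "summable (\<lambda>k. (1 - mu) * V k / (1 - mu))" by (rule summable_divide)
  thus ?thesis using mu by simp
qed

lemma weighted_sq_summable_frequently_small:
  fixes u e :: "nat \<Rightarrow> real"
  assumes e_pos: "\<And>k. e k > 0" and e_div: "\<not> summable e"
    and weighted: "summable (\<lambda>k. e k * (u k)\<^sup>2)" and d: "d > 0"
  shows "\<exists>j\<ge>k. \<bar>u j\<bar> < d"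
proof (rule ccontr)
  assume "\<not> ?thesis"
  hence large: "d \<le> \<bar>u j\<bar>" if "j \<ge> k" for j using that by force
  have "summable (\<lambda>j. e (j + k))"
  proof (rule summable_comparison_test')
    show "summable (\<lambda>j. e (j + k) * (u (j + k))\<^sup>2 / d\<^sup>2)"
      using summable_ignore_initial_segment[OF weighted, of k] by (intro summable_divide)
    fix j :: nat
    have "d\<^sup>2 \<le> \<bar>u (j + k)\<bar>\<^sup>2" using large[of "j + k"] d by (intro power_mono) auto
    hence "d\<^sup>2 \<le> (u (j + k))\<^sup>2" by simp
    hence "e (j + k) * d\<^sup>2 \<le> e (j + k) * (u (j + k))\<^sup>2"
      using e_pos[of "j + k"] by (intro mult_left_mono) auto
    thus "norm (e (j + k)) \<le> e (j + k) * (u (j + k))\<^sup>2 / d\<^sup>2"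
      using e_pos[of "j + k"] d by (simp add: field_simps)
  qed
  hence "summable e" using summable_iff_shift by blast
  thus False using e_div by simp
qed

text \<open>If u changes by at most C e_k per step, every late excursion of u from above 2 d back below d
  spends a stretch of e-weight at least d / C where u^2 \<ge> d^2, which the tail of the weighted
  series cannot afford.\<close>
lemma weighted_sq_summable_tendsto_zero:
  fixes u e :: "nat \<Rightarrow> real"
  assumes e_pos: "\<And>k. e k > 0" and e_div: "\<not> summable e"
    and weighted: "summable (\<lambda>k. e k * (u k)\<^sup>2)" and u_nonneg: "\<And>k. u k \<ge> 0"
    and C: "C > 0" and increment: "\<And>k. \<bar>u (Suc k) - u k\<bar> \<le> C * e k"
  shows "u \<longlonglongrightarrow> 0"
proof (rule LIMSEQ_I)
  fix r :: real assume r: "r > 0"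
  define d where "d = r / 2"
  have d: "d > 0" using r by (simp add: d_def)
  obtain N where N: "\<And>m n. m \<ge> N \<Longrightarrow> norm (\<Sum>k=m..n. e k * (u k)\<^sup>2) < d^3 / C"
    using summable_partial_sum_bound[OF weighted, of "d^3 / C"] d C by auto
  have "u k < 2 * d" if k: "k \<ge> N" for k
  proof (rule ccontr)
    assume "\<not> u k < 2 * d"
    hence uk: "u k \<ge> 2 * d" by simp
    define j where "j = (LEAST j. j \<ge> k \<and> u j < d)"
    have ex: "\<exists>j\<ge>k. u j < d"
      using weighted_sq_summable_frequently_small[OF e_pos e_div weighted d] u_nonneg by simp
    have j: "j \<ge> k" "u j < d" using LeastI_ex[of "\<lambda>j. j \<ge> k \<and> u j < d"] ex unfolding j_def by auto
    have before_j: "u i \<ge> d" if "k \<le> i" "i < j" for i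
      using not_less_Least[of i "\<lambda>j. j \<ge> k \<and> u j < d"] that unfolding j_def by force
    have jk: "j > k" using j uk d by (cases "j = k") auto
    have "u k - u j = (\<Sum>i = k..<j. u i - u (Suc i))"
      using sum_Suc_diff'[of k j "\<lambda>i. - u i"] jk by simp
    also have "\<dots> \<le> (\<Sum>i = k..<j. C * e i)"
      by (intro sum_mono) (use increment in \<open>force simp: abs_le_iff\<close>)
    finally have "d \<le> C * (\<Sum>i = k..<j. e i)" using uk j by (simp add: sum_distrib_left)
    hence "d^3 / C \<le> d\<^sup>2 * (\<Sum>i = k..<j. e i)" using C d
      by (simp add: field_simps power3_eq_cube power2_eq_square)
    also have "\<dots> = (\<Sum>i = k..<j. e i * d\<^sup>2)" by (simp add: sum_distrib_right mult.commute)
    also have "\<dots> \<le> (\<Sum>i = k..<j. e i * (u i)\<^sup>2)"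
    proof (intro sum_mono mult_left_mono)
      fix i assume "i \<in> {k..<j}"
      thus "d\<^sup>2 \<le> (u i)\<^sup>2" using before_j[of i] d by (intro power_mono) auto
    qed (use e_pos less_imp_le in auto)
    also have "\<dots> = (\<Sum>i = k..(j - 1). e i * (u i)\<^sup>2)"
      using jk by (intro sum.cong) auto
    also have "\<dots> < d^3 / C"
      using N[OF k, of "j - 1"] by (simp add: sum_nonneg e_pos less_imp_le)
    finally show False by simp
  qed
  thus "\<exists>no. \<forall>n\<ge>no. norm (u n - 0) < r"
    using u_nonneg by (auto simp: d_def)
qed


definition square_integrable :: "'a measure \<Rightarrow> ('a \<Rightarrow> 'b::euclidean_space) \<Rightarrow> bool" where
  "square_integrable M Y \<longleftrightarrow> Y \<in> borel_measurable M \<and> integrable M (\<lambda>\<omega>. (norm (Y \<omega>))\<^sup>2)"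

lemma integrable_abs_bound:
  fixes Z F :: "'a \<Rightarrow> real"
  assumes "integrable M F" "Z \<in> borel_measurable M" "\<And>\<omega>. \<bar>Z \<omega>\<bar> \<le> F \<omega>"
  shows "integrable M Z"
proof (rule Bochner_Integration.integrable_bound[OF assms(1,2)])
  show "AE x in M. norm (Z x) \<le> norm (F x)"
    using assms(3) by (intro AE_I2) (metis abs_ge_self order.trans real_norm_def)
qed

context prob_space
begin

lemma square_integrableD:
  assumes "square_integrable M Y"
  shows "Y \<in> borel_measurable M" "integrable M (\<lambda>\<omega>. (norm (Y \<omega>))\<^sup>2)"
  using assms unfolding square_integrable_def by auto

lemma square_integrable_affine_bound:
  assumes "square_integrable M Y" "Z \<in> borel_measurable M"
    and "\<And>\<omega>. norm (Z \<omega>) \<le> A * norm (Y \<omega>) + B" "A \<ge> 0"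
  shows "square_integrable M Z"
proof -
  have "integrable M (\<lambda>\<omega>. 2 * A\<^sup>2 * (norm (Y \<omega>))\<^sup>2 + 2 * B\<^sup>2)"
    using square_integrableD(2)[OF assms(1)] by auto
  moreover have "\<bar>(norm (Z \<omega>))\<^sup>2\<bar> \<le> 2 * A\<^sup>2 * (norm (Y \<omega>))\<^sup>2 + 2 * B\<^sup>2" for \<omega>
  proof -
    have "(norm (Z \<omega>))\<^sup>2 \<le> (A * norm (Y \<omega>) + B)\<^sup>2"
      using assms(3)[of \<omega>] by (meson norm_ge_zero power_mono)
    also have "\<dots> \<le> 2 * A\<^sup>2 * (norm (Y \<omega>))\<^sup>2 + 2 * B\<^sup>2"
      using square_add_le[of "A * norm (Y \<omega>)" B] by (simp add: power_mult_distrib)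
    finally show ?thesis by simp
  qed
  ultimately show ?thesis
    unfolding square_integrable_def using assms(2) by (auto intro: integrable_abs_bound)
qed

lemma square_integrable_const: "square_integrable M (\<lambda>\<omega>. c)"
  unfolding square_integrable_def by auto

lemma square_integrable_scaleR: "square_integrable M Y \<Longrightarrow> square_integrable M (\<lambda>\<omega>. c *\<^sub>R Y \<omega>)"
  by (rule square_integrable_affine_bound[where A="\<bar>c\<bar>" and B=0])
     (auto simp: square_integrable_def)

lemma square_integrable_add:
  assumes Y: "square_integrable M Y" and Z: "square_integrable M Z"
  shows "square_integrable M (\<lambda>\<omega>. Y \<omega> + Z \<omega>)"
proof -
  have "integrable M (\<lambda>\<omega>. 2 * (norm (Y \<omega>))\<^sup>2 + 2 * (norm (Z \<omega>))\<^sup>2)"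
    using square_integrableD(2)[OF Y] square_integrableD(2)[OF Z] by auto
  moreover have "\<bar>(norm (Y \<omega> + Z \<omega>))\<^sup>2\<bar> \<le> 2 * (norm (Y \<omega>))\<^sup>2 + 2 * (norm (Z \<omega>))\<^sup>2" for \<omega>
  proof -
    have "(norm (Y \<omega> + Z \<omega>))\<^sup>2 \<le> (norm (Y \<omega>) + norm (Z \<omega>))\<^sup>2"
      by (intro power_mono norm_triangle_ineq) simp
    also have "\<dots> \<le> 2 * (norm (Y \<omega>))\<^sup>2 + 2 * (norm (Z \<omega>))\<^sup>2" by (rule square_add_le)
    finally show ?thesis by simp
  qed
  moreover have "(\<lambda>\<omega>. Y \<omega> + Z \<omega>) \<in> borel_measurable M"
    using square_integrableD(1)[OF Y] square_integrableD(1)[OF Z] by measurable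
  ultimately show ?thesis unfolding square_integrable_def by (auto intro: integrable_abs_bound)
qed

lemma square_integrable_diff:
  "square_integrable M Y \<Longrightarrow> square_integrable M Z \<Longrightarrow> square_integrable M (\<lambda>\<omega>. Y \<omega> - Z \<omega>)"
  using square_integrable_add[of Y "\<lambda>\<omega>. (-1) *\<^sub>R Z \<omega>"] square_integrable_scaleR[of Z "-1"] by simp

lemma square_integrable_integrable_norm:
  "square_integrable M Y \<Longrightarrow> integrable M (\<lambda>\<omega>. norm (Y \<omega>))"
  by (rule square_integrable_imp_integrable) (auto simp: square_integrable_def)

lemma square_integrable_integrable_norm_mult:
  assumes Y: "square_integrable M Y" and Z: "square_integrable M Z"
  shows "integrable M (\<lambda>\<omega>. norm (Y \<omega>) * norm (Z \<omega>))"
proof -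
  have "integrable M (\<lambda>\<omega>. 1 * (norm (Y \<omega>))\<^sup>2 / 2 + (norm (Z \<omega>))\<^sup>2 / (2 * 1))"
    using square_integrableD(2)[OF Y] square_integrableD(2)[OF Z] by auto
  moreover have "\<bar>norm (Y \<omega>) * norm (Z \<omega>)\<bar> \<le> 1 * (norm (Y \<omega>))\<^sup>2 / 2 + (norm (Z \<omega>))\<^sup>2 / (2 * 1)" for \<omega>
    using young_ineq_weighted[of 1 "norm (Y \<omega>)" "norm (Z \<omega>)"] by simp
  moreover have "(\<lambda>\<omega>. norm (Y \<omega>) * norm (Z \<omega>)) \<in> borel_measurable M"
    using square_integrableD(1)[OF Y] square_integrableD(1)[OF Z] by measurable
  ultimately show ?thesis by (auto intro: integrable_abs_bound)
qed

lemma square_integrable_integrable_inner: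
  assumes Y: "square_integrable M Y" and Z: "square_integrable M Z"
  shows "integrable M (\<lambda>\<omega>. Y \<omega> \<bullet> Z \<omega>)"
proof (rule integrable_abs_bound[OF square_integrable_integrable_norm_mult[OF Y Z]])
  show "(\<lambda>\<omega>. Y \<omega> \<bullet> Z \<omega>) \<in> borel_measurable M"
    using square_integrableD(1)[OF Y] square_integrableD(1)[OF Z] by measurable
qed (rule Cauchy_Schwarz_ineq2)

lemma expectation_square_le:
  fixes Y :: "'a \<Rightarrow> real"
  assumes "integrable M Y" "integrable M (\<lambda>\<omega>. (Y \<omega>)\<^sup>2)"
  shows "(expectation Y)\<^sup>2 \<le> expectation (\<lambda>\<omega>. (Y \<omega>)\<^sup>2)"
  using variance_eq[OF assms] variance_positive[of Y] by simp

lemma expectation_norm_le_sqrt: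
  assumes "square_integrable M Y"
  shows "expectation (\<lambda>\<omega>. norm (Y \<omega>)) \<le> sqrt (expectation (\<lambda>\<omega>. (norm (Y \<omega>))\<^sup>2))"
proof -
  have "(expectation (\<lambda>\<omega>. norm (Y \<omega>)))\<^sup>2 \<le> expectation (\<lambda>\<omega>. (norm (Y \<omega>))\<^sup>2)"
    using assms by (intro expectation_square_le square_integrable_integrable_norm)
                   (auto simp: square_integrable_def)
  thus ?thesis using real_le_rsqrt by blast
qed

lemma abs_expectation_le:
  fixes h b :: "'a \<Rightarrow> real"
  assumes "integrable M b" "h \<in> borel_measurable M" "\<And>\<omega>. \<bar>h \<omega>\<bar> \<le> b \<omega>"
  shows "\<bar>expectation h\<bar> \<le> expectation b"
proof -
  have "integrable M h" by (rule integrable_abs_bound[OF assms])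
  hence "expectation (\<lambda>\<omega>. \<bar>h \<omega>\<bar>) \<le> expectation b" using assms by (intro integral_mono) auto
  thus ?thesis using integral_abs_bound[of M h] by linarith
qed

text \<open>Unbiasedness is assumed coordinatewise, since conditional expectation is only available
  for real-valued functions.\<close>
lemma expectation_inner_cond_exp:
  fixes Z X Y :: "'a \<Rightarrow> 'v::euclidean_space"
  assumes "subalgebra M F"
    and Z: "square_integrable M Z" and Z_F: "Z \<in> borel_measurable F"
    and X: "square_integrable M X" and Y: "square_integrable M Y"
    and cond: "\<And>b. b \<in> Basis \<Longrightarrow> AE \<omega> in M. real_cond_exp M F (\<lambda>\<omega>. X \<omega> \<bullet> b) \<omega> = Y \<omega> \<bullet> b"
  shows "expectation (\<lambda>\<omega>. Z \<omega> \<bullet> X \<omega>) = expectation (\<lambda>\<omega>. Z \<omega> \<bullet> Y \<omega>)"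
proof -
  interpret S: finite_measure_subalgebra M F by unfold_locales fact
  have [measurable]: "Z \<in> borel_measurable M" "X \<in> borel_measurable M" "Y \<in> borel_measurable M"
    using Z X Y by (auto dest: square_integrableD)
  have coordinate_integrable: "integrable M (\<lambda>\<omega>. (Z \<omega> \<bullet> b) * (W \<omega> \<bullet> b))"
    if b: "b \<in> Basis" and W: "square_integrable M W" for b W
  proof (rule integrable_abs_bound[OF square_integrable_integrable_norm_mult[OF Z W]])
    show "(\<lambda>\<omega>. (Z \<omega> \<bullet> b) * (W \<omega> \<bullet> b)) \<in> borel_measurable M"
      using square_integrableD(1)[OF W] by measurable
    show "\<bar>(Z \<omega> \<bullet> b) * (W \<omega> \<bullet> b)\<bar> \<le> norm (Z \<omega>) * norm (W \<omega>)" for \<omega>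
      using Basis_le_norm[OF b, of "Z \<omega>"] Basis_le_norm[OF b, of "W \<omega>"]
      by (simp add: abs_mult mult_mono')
  qed
  have coordinate: "expectation (\<lambda>\<omega>. (Z \<omega> \<bullet> b) * (X \<omega> \<bullet> b))
      = expectation (\<lambda>\<omega>. (Z \<omega> \<bullet> b) * (Y \<omega> \<bullet> b))" if b: "b \<in> Basis" for b
  proof -
    have "(\<lambda>\<omega>. Z \<omega> \<bullet> b) \<in> borel_measurable F" using Z_F by measurable
    hence "expectation (\<lambda>\<omega>. (Z \<omega> \<bullet> b) * (X \<omega> \<bullet> b))
        = expectation (\<lambda>\<omega>. (Z \<omega> \<bullet> b) * real_cond_exp M F (\<lambda>\<omega>. X \<omega> \<bullet> b) \<omega>)"
      using S.real_cond_exp_intg(2)[OF coordinate_integrable[OF b X]] by simp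
    also have "\<dots> = expectation (\<lambda>\<omega>. (Z \<omega> \<bullet> b) * (Y \<omega> \<bullet> b))"
      by (rule integral_cong_AE) (use cond[OF b] in auto)
    finally show ?thesis .
  qed
  have "expectation (\<lambda>\<omega>. Z \<omega> \<bullet> X \<omega>) = (\<Sum>b\<in>Basis. expectation (\<lambda>\<omega>. (Z \<omega> \<bullet> b) * (X \<omega> \<bullet> b)))"
    by (subst euclidean_inner, rule Bochner_Integration.integral_sum)
       (rule coordinate_integrable[OF _ X])
  also have "\<dots> = (\<Sum>b\<in>Basis. expectation (\<lambda>\<omega>. (Z \<omega> \<bullet> b) * (Y \<omega> \<bullet> b)))"
    by (rule sum.cong) (auto simp: coordinate)
  also have "\<dots> = expectation (\<lambda>\<omega>. Z \<omega> \<bullet> Y \<omega>)"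
    by (subst (2) euclidean_inner, rule Bochner_Integration.integral_sum[symmetric])
       (rule coordinate_integrable[OF _ Y])
  finally show ?thesis .
qed

end

lemma space_hist: "space (hist M g t) = space M"
  unfolding hist_def by (rule space_measure_of) auto

lemma sets_hist:
  "sets (hist M g t) = sigma_sets (space M) {g i -` A \<inter> space M | i A. i \<in> {1..<t} \<and> A \<in> sets borel}"
  unfolding hist_def by (rule sets_measure_of) auto

lemma subalgebra_hist:
  assumes "\<And>i. 1 \<le> i \<Longrightarrow> i < t \<Longrightarrow> g i \<in> borel_measurable M"
  shows "subalgebra M (hist M g t)"
  unfolding subalgebra_def
proof
  show "space (hist M g t) = space M" by (rule space_hist)
  show "sets (hist M g t) \<subseteq> sets M"
    unfolding sets_hist
    by (rule sets.sigma_sets_subset) (use assms in \<open>auto intro: measurable_sets\<close>)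
qed

lemma measurable_hist:
  assumes "1 \<le> i" "i < t"
  shows "g i \<in> borel_measurable (hist M g t)"
proof (rule measurableI)
  fix A :: "'b set" assume "A \<in> sets borel"
  hence "g i -` A \<inter> space M \<in> sets (hist M g t)"
    unfolding sets_hist using assms by (intro sigma_sets.Basic) auto
  then show "g i -` A \<inter> space (hist M g t) \<in> sets (hist M g t)" by (simp add: space_hist)
qed auto


locale sum_setting = prob_space M for M :: "'a measure" +
  fixes f :: "'v::euclidean_space \<Rightarrow> real" and f' :: "'v \<Rightarrow> 'v"
    and L fstar mu lam G :: real and eta :: "nat \<Rightarrow> real" and x1 :: 'v
    and g :: "nat \<Rightarrow> 'a \<Rightarrow> 'v"
  assumes grad: "\<And>x. (f has_derivative (\<lambda>h. f' x \<bullet> h)) (at x)"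
    and lip: "\<And>x y. norm (f' x - f' y) \<le> L * norm (x - y)"
    and lower: "\<And>x. fstar \<le> f x"
    and mu_nonneg: "0 \<le> mu" and mu_less_1: "mu < 1"
    and eta_pos: "\<And>t. t \<ge> 1 \<Longrightarrow> eta t > 0"
    and eta_not_summable: "\<not> summable (\<lambda>t. eta (Suc t))"
    and eta_sq_summable: "summable (\<lambda>t. (eta (Suc t))\<^sup>2)"
    and g_measurable: "\<And>t. t \<ge> 1 \<Longrightarrow> g t \<in> borel_measurable M"
    and unbiased: "\<And>t b. t \<ge> 1 \<Longrightarrow> b \<in> Basis \<Longrightarrow>
        AE \<omega> in M. real_cond_exp M (hist M g t) (\<lambda>\<omega>. g t \<omega> \<bullet> b) \<omega>
                   = f' (sum_x mu lam eta x1 (\<lambda>i. g i \<omega>) t) \<bullet> b"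
    and second_moment: "\<And>t. t \<ge> 1 \<Longrightarrow>
        (\<integral>\<^sup>+ \<omega>. ennreal ((norm (g t \<omega>))\<^sup>2) \<partial>M) \<le> ennreal (G\<^sup>2)"
begin

text \<open>Indices are shifted by one against the paper: x_seq k is x_(k+1), m_seq k is m_k,
  and the step from k to Suc k uses e k = eta_(k+1) and g_(k+1).\<close>
definition e :: "nat \<Rightarrow> real" where "e k = eta (Suc k)"
definition x_seq :: "nat \<Rightarrow> 'a \<Rightarrow> 'v" where "x_seq k \<omega> = fst (sum_xm mu lam eta x1 (\<lambda>i. g i \<omega>) k)"
definition m_seq :: "nat \<Rightarrow> 'a \<Rightarrow> 'v" where "m_seq k \<omega> = snd (sum_xm mu lam eta x1 (\<lambda>i. g i \<omega>) k)"
definition shift_coeff :: real where "shift_coeff = mu * (1 - (1 - mu) * lam) / (1 - mu)"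
definition z_seq :: "nat \<Rightarrow> 'a \<Rightarrow> 'v" where "z_seq k \<omega> = x_seq k \<omega> + shift_coeff *\<^sub>R m_seq k \<omega>"

text \<open>L itself may be nonpositive (only if f' is constant); K is a positive Lipschitz constant.\<close>
definition K :: real where "K = max L 1"

lemma K_pos: "K > 0"
  unfolding K_def by simp

lemma lipschitz_K: "norm (f' x - f' y) \<le> K * norm (x - y)"
proof -
  have "L * norm (x - y) \<le> K * norm (x - y)" unfolding K_def by (intro mult_right_mono) auto
  thus ?thesis using lip[of x y] by linarith
qed

lemma e_pos: "e k > 0"
  unfolding e_def by (rule eta_pos) simp

lemma m_seq_0: "m_seq 0 \<omega> = 0"
  unfolding m_seq_def by simp

lemma m_seq_Suc: "m_seq (Suc k) \<omega> = mu *\<^sub>R m_seq k \<omega> - e k *\<^sub>R g (Suc k) \<omega>"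
  unfolding m_seq_def e_def by (simp add: Let_def)

lemma x_seq_Suc:
  "x_seq (Suc k) \<omega> = x_seq k \<omega> - (lam * e k) *\<^sub>R g (Suc k) \<omega> + (1 - (1 - mu) * lam) *\<^sub>R m_seq (Suc k) \<omega>"
  unfolding x_seq_def m_seq_def e_def by (simp add: Let_def)

lemma z_seq_Suc: "z_seq (Suc k) \<omega> = z_seq k \<omega> - (e k / (1 - mu)) *\<^sub>R g (Suc k) \<omega>"
proof -
  define s where "s = 1 - (1 - mu) * lam + shift_coeff"
  have s_mu: "s * mu = shift_coeff" unfolding s_def shift_coeff_def using mu_less_1 by (simp add: field_simps)
  have s_e: "lam * e k + s * e k = e k / (1 - mu)"
    unfolding s_def shift_coeff_def using mu_less_1 by (simp add: field_simps)
  have "z_seq (Suc k) \<omega>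
      = x_seq k \<omega> - (lam * e k) *\<^sub>R g (Suc k) \<omega> + s *\<^sub>R (mu *\<^sub>R m_seq k \<omega> - e k *\<^sub>R g (Suc k) \<omega>)"
    unfolding z_seq_def x_seq_Suc m_seq_Suc s_def by (simp add: algebra_simps)
  also have "\<dots> = x_seq k \<omega> + (s * mu) *\<^sub>R m_seq k \<omega> - (lam * e k + s * e k) *\<^sub>R g (Suc k) \<omega>"
    by (simp add: algebra_simps)
  also have "\<dots> = z_seq k \<omega> - (e k / (1 - mu)) *\<^sub>R g (Suc k) \<omega>"
    unfolding s_mu s_e z_seq_def by simp
  finally show ?thesis .
qed

lemma x_seq_eq: "x_seq k \<omega> = z_seq k \<omega> - shift_coeff *\<^sub>R m_seq k \<omega>"
  unfolding z_seq_def by simp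

lemma sum_x_eq_x_seq: "sum_x mu lam eta x1 (\<lambda>i. g i \<omega>) t = x_seq (t - 1) \<omega>"
  unfolding sum_x_def x_seq_def by simp

lemma subalgebra_hist_M: "subalgebra M (hist M g t)"
  by (rule subalgebra_hist) (use g_measurable in auto)

lemma x_seq_m_seq_measurable_hist:
  assumes "k < t"
  shows "x_seq k \<in> borel_measurable (hist M g t) \<and> m_seq k \<in> borel_measurable (hist M g t)"
  using assms
proof (induction k)
  case 0
  then show ?case unfolding x_seq_def m_seq_def by simp
next
  case (Suc k)
  hence x: "x_seq k \<in> borel_measurable (hist M g t)" and m: "m_seq k \<in> borel_measurable (hist M g t)"
    by auto
  have g: "g (Suc k) \<in> borel_measurable (hist M g t)" using Suc.prems by (intro measurable_hist) auto
  have "m_seq (Suc k) \<in> borel_measurable (hist M g t)"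
    unfolding m_seq_Suc[abs_def] using m g by measurable
  moreover have "x_seq (Suc k) \<in> borel_measurable (hist M g t)"
    unfolding x_seq_Suc[abs_def] using x g calculation by measurable
  ultimately show ?case by simp
qed

lemma measurable_seqs [measurable]:
  "x_seq k \<in> borel_measurable M" "m_seq k \<in> borel_measurable M" "z_seq k \<in> borel_measurable M"
proof -
  show x: "x_seq k \<in> borel_measurable M" and m: "m_seq k \<in> borel_measurable M"
    using x_seq_m_seq_measurable_hist[of k "Suc k"] measurable_from_subalg[OF subalgebra_hist_M]
    by auto
  show "z_seq k \<in> borel_measurable M" unfolding z_seq_def[abs_def] using x m by measurable
qed

lemma f'_measurable [measurable]: "f' \<in> borel_measurable borel"
  by (intro borel_measurable_continuous_onI lipschitz_on_continuous_on[of K] lipschitz_onI)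
     (auto simp: dist_norm lipschitz_K less_imp_le[OF K_pos])

lemma f_measurable [measurable]: "f \<in> borel_measurable borel"
  using has_derivative_continuous[OF grad]
  by (intro borel_measurable_continuous_onI) (simp add: continuous_at_imp_continuous_on)

lemma remainder_le: "\<bar>f y - f x - f' x \<bullet> (y - x)\<bar> \<le> K / 2 * (norm (y - x))\<^sup>2"
  by (rule lipschitz_gradient_remainder_le[OF grad lipschitz_K])

lemma g_square_integrable: "k \<ge> 1 \<Longrightarrow> square_integrable M (g k)"
proof -
  assume k: "k \<ge> 1"
  have "(\<integral>\<^sup>+ \<omega>. ennreal (norm ((norm (g k \<omega>))\<^sup>2)) \<partial>M) < \<infinity>"
    using second_moment[OF k] by (simp add: le_less_trans)
  hence "integrable M (\<lambda>\<omega>. (norm (g k \<omega>))\<^sup>2)"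
    using g_measurable[OF k] by (subst integrable_iff_bounded) auto
  thus ?thesis using g_measurable[OF k] unfolding square_integrable_def by simp
qed

lemma g_second_moment_le: "k \<ge> 1 \<Longrightarrow> expectation (\<lambda>\<omega>. (norm (g k \<omega>))\<^sup>2) \<le> G\<^sup>2"
proof -
  assume k: "k \<ge> 1"
  have "ennreal (expectation (\<lambda>\<omega>. (norm (g k \<omega>))\<^sup>2)) = (\<integral>\<^sup>+ \<omega>. ennreal ((norm (g k \<omega>))\<^sup>2) \<partial>M)"
    using square_integrableD(2)[OF g_square_integrable[OF k]]
    by (intro nn_integral_eq_integral[symmetric]) auto
  also have "\<dots> \<le> ennreal (G\<^sup>2)" using second_moment[OF k] .
  finally show ?thesis by simp
qed

lemma g_first_moment_le: "k \<ge> 1 \<Longrightarrow> expectation (\<lambda>\<omega>. norm (g k \<omega>)) \<le> \<bar>G\<bar>"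
proof -
  assume k: "k \<ge> 1"
  have "expectation (\<lambda>\<omega>. norm (g k \<omega>)) \<le> sqrt (expectation (\<lambda>\<omega>. (norm (g k \<omega>))\<^sup>2))"
    by (rule expectation_norm_le_sqrt[OF g_square_integrable[OF k]])
  also have "\<dots> \<le> sqrt (G\<^sup>2)" using g_second_moment_le[OF k] by (rule real_sqrt_le_mono)
  finally show ?thesis by simp
qed

lemma m_seq_square_integrable: "square_integrable M (m_seq k)"
proof (induction k)
  case 0 thus ?case using square_integrable_const[of 0] by (simp add: m_seq_0[abs_def])
next
  case (Suc k)
  thus ?case unfolding m_seq_Suc[abs_def]
    by (intro square_integrable_diff square_integrable_scaleR g_square_integrable) simp_all
qed

lemma z_seq_square_integrable: "square_integrable M (z_seq k)"
proof (induction k)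
  case 0
  have "z_seq 0 = (\<lambda>\<omega>. x1)" unfolding z_seq_def x_seq_def m_seq_def by auto
  thus ?case using square_integrable_const by simp
next
  case (Suc k)
  thus ?case unfolding z_seq_Suc[abs_def]
    by (intro square_integrable_diff square_integrable_scaleR g_square_integrable) simp_all
qed

lemma x_seq_square_integrable: "square_integrable M (x_seq k)"
  unfolding x_seq_eq[abs_def]
  by (intro square_integrable_diff square_integrable_scaleR z_seq_square_integrable
      m_seq_square_integrable)

lemma square_integrable_f':
  assumes Y: "square_integrable M Y"
  shows "square_integrable M (\<lambda>\<omega>. f' (Y \<omega>))"
proof (rule square_integrable_affine_bound[OF Y, where A=K and B="norm (f' 0)"])
  show "(\<lambda>\<omega>. f' (Y \<omega>)) \<in> borel_measurable M" using square_integrableD(1)[OF Y] by measurable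
  show "norm (f' (Y \<omega>)) \<le> K * norm (Y \<omega>) + norm (f' 0)" for \<omega>
    using lipschitz_K[of "Y \<omega>" 0] norm_triangle_ineq2[of "f' (Y \<omega>)" "f' 0"] by simp
qed (use K_pos in auto)

lemma integrable_f:
  assumes Y: "square_integrable M Y"
  shows "integrable M (\<lambda>\<omega>. f (Y \<omega>))"
proof (rule integrable_abs_bound)
  show "integrable M (\<lambda>\<omega>. \<bar>fstar\<bar> + \<bar>f 0\<bar> + norm (f' 0) * norm (Y \<omega>) + K / 2 * (norm (Y \<omega>))\<^sup>2)"
    using square_integrable_integrable_norm[OF Y] square_integrableD(2)[OF Y] by auto
  show "(\<lambda>\<omega>. f (Y \<omega>)) \<in> borel_measurable M" using square_integrableD(1)[OF Y] by measurable
  fix \<omega>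
  have "\<bar>f (Y \<omega>) - f 0 - f' 0 \<bullet> Y \<omega>\<bar> \<le> K / 2 * (norm (Y \<omega>))\<^sup>2"
    using remainder_le[of "Y \<omega>" 0] by simp
  moreover have "\<bar>f' 0 \<bullet> Y \<omega>\<bar> \<le> norm (f' 0) * norm (Y \<omega>)" by (rule Cauchy_Schwarz_ineq2)
  ultimately show "\<bar>f (Y \<omega>)\<bar> \<le> \<bar>fstar\<bar> + \<bar>f 0\<bar> + norm (f' 0) * norm (Y \<omega>) + K / 2 * (norm (Y \<omega>))\<^sup>2"
    using lower[of "Y \<omega>"] by (simp only: abs_le_iff) linarith
qed

lemma expectation_grad_inner_g:
  "expectation (\<lambda>\<omega>. f' (z_seq k \<omega>) \<bullet> g (Suc k) \<omega>)
     = expectation (\<lambda>\<omega>. f' (z_seq k \<omega>) \<bullet> f' (x_seq k \<omega>))"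
proof (rule expectation_inner_cond_exp[OF subalgebra_hist_M])
  show "(\<lambda>\<omega>. f' (z_seq k \<omega>)) \<in> borel_measurable (hist M g (Suc k))"
  proof -
    have "x_seq k \<in> borel_measurable (hist M g (Suc k))" "m_seq k \<in> borel_measurable (hist M g (Suc k))"
      using x_seq_m_seq_measurable_hist[of k "Suc k"] by auto
    thus ?thesis unfolding z_seq_def[abs_def] by measurable
  qed
  show "AE \<omega> in M. real_cond_exp M (hist M g (Suc k)) (\<lambda>\<omega>. g (Suc k) \<omega> \<bullet> b) \<omega>
      = f' (x_seq k \<omega>) \<bullet> b" if "b \<in> Basis" for b
    using unbiased[of "Suc k" b] that by (simp add: sum_x_eq_x_seq)
qed (intro square_integrable_f' z_seq_square_integrable x_seq_square_integrable
       g_square_integrable; simp)+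

definition msq :: "nat \<Rightarrow> real" where "msq k = expectation (\<lambda>\<omega>. (norm (m_seq k \<omega>))\<^sup>2)"
definition gsq :: "nat \<Rightarrow> real" where "gsq k = expectation (\<lambda>\<omega>. (norm (f' (z_seq k \<omega>)))\<^sup>2)"
definition gnorm :: "nat \<Rightarrow> real" where "gnorm k = expectation (\<lambda>\<omega>. norm (f' (z_seq k \<omega>)))"
definition fz :: "nat \<Rightarrow> real" where "fz k = expectation (\<lambda>\<omega>. f (z_seq k \<omega>))"

lemma msq_nonneg: "msq k \<ge> 0"
  unfolding msq_def by (rule integral_nonneg_AE) auto

lemma gsq_nonneg: "gsq k \<ge> 0"
  unfolding gsq_def by (rule integral_nonneg_AE) auto

lemma gnorm_nonneg: "gnorm k \<ge> 0"
  unfolding gnorm_def by (rule integral_nonneg_AE) auto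

lemma fz_lower: "fstar \<le> fz k"
proof -
  have "expectation (\<lambda>\<omega>. fstar) \<le> fz k"
    unfolding fz_def by (rule integral_mono[OF _ integrable_f[OF z_seq_square_integrable]])
                        (auto simp: lower)
  thus ?thesis by (simp add: prob_space)
qed

lemma gsq_le: "gsq k \<le> 2 * K * (fz k - fstar)"
proof -
  have Z: "square_integrable M (\<lambda>\<omega>. f' (z_seq k \<omega>))"
    by (rule square_integrable_f'[OF z_seq_square_integrable])
  have "gsq k \<le> expectation (\<lambda>\<omega>. 2 * K * (f (z_seq k \<omega>) - fstar))"
    unfolding gsq_def using square_integrableD(2)[OF Z] integrable_f[OF z_seq_square_integrable]
    by (intro integral_mono lipschitz_gradient_norm_sq_le[OF grad lipschitz_K K_pos lower]) auto
  also have "\<dots> = 2 * K * (fz k - fstar)"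
    unfolding fz_def using integrable_f[OF z_seq_square_integrable] by (simp add: prob_space)
  finally show ?thesis .
qed

lemma msq_Suc_le: "msq (Suc k) \<le> mu * msq k + (e k)\<^sup>2 * G\<^sup>2 / (1 - mu)"
proof -
  have g: "square_integrable M (g (Suc k))" by (rule g_square_integrable) simp
  have pointwise: "(norm (m_seq (Suc k) \<omega>))\<^sup>2
      \<le> mu * (norm (m_seq k \<omega>))\<^sup>2 + (e k)\<^sup>2 / (1 - mu) * (norm (g (Suc k) \<omega>))\<^sup>2" for \<omega>
  proof -
    have "norm (m_seq (Suc k) \<omega>) \<le> mu * norm (m_seq k \<omega>) + e k * norm (g (Suc k) \<omega>)"
      unfolding m_seq_Suc using norm_triangle_ineq4[of "mu *\<^sub>R m_seq k \<omega>" "e k *\<^sub>R g (Suc k) \<omega>"]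
        mu_nonneg e_pos[of k] by simp
    hence "(norm (m_seq (Suc k) \<omega>))\<^sup>2 \<le> (mu * norm (m_seq k \<omega>) + e k * norm (g (Suc k) \<omega>))\<^sup>2"
      by (intro power_mono) auto
    also have "\<dots> \<le> mu * (norm (m_seq k \<omega>))\<^sup>2 + (e k * norm (g (Suc k) \<omega>))\<^sup>2 / (1 - mu)"
      by (rule square_convex_combination_le[OF mu_nonneg mu_less_1])
    finally show ?thesis by (simp add: power_mult_distrib)
  qed
  have "msq (Suc k) \<le> expectation (\<lambda>\<omega>. mu * (norm (m_seq k \<omega>))\<^sup>2
      + (e k)\<^sup>2 / (1 - mu) * (norm (g (Suc k) \<omega>))\<^sup>2)"
    unfolding msq_def
    using square_integrableD(2)[OF m_seq_square_integrable] square_integrableD(2)[OF g]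
    by (intro integral_mono pointwise) auto
  also have "\<dots> = mu * msq k + (e k)\<^sup>2 / (1 - mu) * expectation (\<lambda>\<omega>. (norm (g (Suc k) \<omega>))\<^sup>2)"
    unfolding msq_def
    using square_integrableD(2)[OF m_seq_square_integrable] square_integrableD(2)[OF g] by simp
  also have "\<dots> \<le> mu * msq k + (e k)\<^sup>2 / (1 - mu) * G\<^sup>2"
    using g_second_moment_le[of "Suc k"] mu_less_1 by (intro add_left_mono mult_left_mono) auto
  finally show ?thesis by simp
qed

lemma e_sq_summable: "summable (\<lambda>k. (e k)\<^sup>2)"
  using eta_sq_summable unfolding e_def .

lemma msq_summable: "summable msq"
proof (rule contraction_recursion_summable[where mu=mu and b="\<lambda>k. (e k)\<^sup>2 * G\<^sup>2 / (1 - mu)"])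
  show "summable (\<lambda>k. (e k)\<^sup>2 * G\<^sup>2 / (1 - mu))"
    by (intro summable_divide summable_mult2 e_sq_summable)
qed (use msq_Suc_le msq_nonneg mu_nonneg mu_less_1 in auto)

lemma e_msq_summable: "summable (\<lambda>k. e k * msq k)"
proof (rule summable_comparison_test'[where g="\<lambda>k. (1 + (\<Sum>k. (e k)\<^sup>2)) * msq k" and N=0])
  show "summable (\<lambda>k. (1 + (\<Sum>k. (e k)\<^sup>2)) * msq k)" by (intro summable_mult msq_summable)
  fix k
  have "e k \<le> 1 + (e k)\<^sup>2" using zero_le_power2[of "e k - 1/2"]
    by (simp add: power2_eq_square algebra_simps)
  also have "(e k)\<^sup>2 \<le> (\<Sum>k. (e k)\<^sup>2)"
    using sum_le_suminf[OF e_sq_summable, of "{k}"] by simp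
  finally show "norm (e k * msq k) \<le> (1 + (\<Sum>k. (e k)\<^sup>2)) * msq k"
    using e_pos[of k] msq_nonneg[of k] by (simp add: mult_right_mono)
qed

lemma inner_grad_lower:
  "f' (z_seq k \<omega>) \<bullet> f' (x_seq k \<omega>)
     \<ge> (norm (f' (z_seq k \<omega>)))\<^sup>2 / 2 - K\<^sup>2 * shift_coeff\<^sup>2 * (norm (m_seq k \<omega>))\<^sup>2 / 2"
proof -
  define p where "p = f' (z_seq k \<omega>)"
  define q where "q = f' (x_seq k \<omega>)"
  define r where "r = K * (\<bar>shift_coeff\<bar> * norm (m_seq k \<omega>))"
  have "norm (p - q) \<le> r"
    using lipschitz_K[of "z_seq k \<omega>" "x_seq k \<omega>"] unfolding p_def q_def r_def x_seq_eq by simp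
  hence "p \<bullet> (p - q) \<le> norm p * r"
    using norm_cauchy_schwarz[of p "p - q"] by (meson mult_left_mono norm_ge_zero order.trans)
  also have "\<dots> \<le> 1 * (norm p)\<^sup>2 / 2 + r\<^sup>2 / (2 * 1)" by (rule young_ineq_weighted) simp
  finally have "(norm p)\<^sup>2 / 2 - r\<^sup>2 / 2 \<le> p \<bullet> q"
    by (simp add: inner_diff_right dot_square_norm)
  thus ?thesis unfolding p_def q_def r_def by (simp add: power_mult_distrib)
qed

lemma fz_Suc_le:
  "fz (Suc k) \<le> fz k - e k / (2 * (1 - mu)) * gsq k
     + (e k / (2 * (1 - mu)) * K\<^sup>2 * shift_coeff\<^sup>2 * msq k + K / 2 * (e k / (1 - mu))\<^sup>2 * G\<^sup>2)"
proof -
  define a where "a = e k / (1 - mu)"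
  have a_pos: "a > 0" unfolding a_def using e_pos[of k] mu_less_1 by simp
  have g: "square_integrable M (g (Suc k))" by (rule g_square_integrable) simp
  have Z: "square_integrable M (\<lambda>\<omega>. f' (z_seq k \<omega>))"
    by (rule square_integrable_f'[OF z_seq_square_integrable])
  have X: "square_integrable M (\<lambda>\<omega>. f' (x_seq k \<omega>))"
    by (rule square_integrable_f'[OF x_seq_square_integrable])
  have descent: "f (z_seq (Suc k) \<omega>)
      \<le> f (z_seq k \<omega>) - a * (f' (z_seq k \<omega>) \<bullet> g (Suc k) \<omega>) + K / 2 * a\<^sup>2 * (norm (g (Suc k) \<omega>))\<^sup>2"
    for \<omega>
  proof -
    have step: "z_seq (Suc k) \<omega> - z_seq k \<omega> = - (a *\<^sub>R g (Suc k) \<omega>)"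
      unfolding z_seq_Suc a_def by simp
    show ?thesis
      using abs_le_D1[OF remainder_le[of "z_seq (Suc k) \<omega>" "z_seq k \<omega>"]] a_pos
      unfolding step by (simp add: power_mult_distrib)
  qed
  have i1: "integrable M (\<lambda>\<omega>. f' (z_seq k \<omega>) \<bullet> g (Suc k) \<omega>)"
    by (rule square_integrable_integrable_inner[OF Z g])
  note i2 = square_integrableD(2)[OF g]
  note i3 = integrable_f[OF z_seq_square_integrable]
  have "fz (Suc k) \<le> expectation (\<lambda>\<omega>. f (z_seq k \<omega>) - a * (f' (z_seq k \<omega>) \<bullet> g (Suc k) \<omega>)
      + K / 2 * a\<^sup>2 * (norm (g (Suc k) \<omega>))\<^sup>2)"
    unfolding fz_def using i1 i2 i3 by (intro integral_mono descent) auto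
  also have "\<dots> = fz k - a * expectation (\<lambda>\<omega>. f' (z_seq k \<omega>) \<bullet> g (Suc k) \<omega>)
      + K / 2 * a\<^sup>2 * expectation (\<lambda>\<omega>. (norm (g (Suc k) \<omega>))\<^sup>2)"
    unfolding fz_def using i1 i2 i3 by simp
  also have "expectation (\<lambda>\<omega>. f' (z_seq k \<omega>) \<bullet> g (Suc k) \<omega>) \<ge> gsq k / 2 - K\<^sup>2 * shift_coeff\<^sup>2 * msq k / 2"
  proof -
    have "gsq k / 2 - K\<^sup>2 * shift_coeff\<^sup>2 * msq k / 2 = expectation (\<lambda>\<omega>.
        (norm (f' (z_seq k \<omega>)))\<^sup>2 / 2 - K\<^sup>2 * shift_coeff\<^sup>2 * (norm (m_seq k \<omega>))\<^sup>2 / 2)"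
      unfolding gsq_def msq_def
      using square_integrableD(2)[OF Z] square_integrableD(2)[OF m_seq_square_integrable] by simp
    also have "\<dots> \<le> expectation (\<lambda>\<omega>. f' (z_seq k \<omega>) \<bullet> f' (x_seq k \<omega>))"
      using square_integrableD(2)[OF Z] square_integrableD(2)[OF m_seq_square_integrable]
        square_integrable_integrable_inner[OF Z X]
      by (intro integral_mono inner_grad_lower) auto
    finally show ?thesis unfolding expectation_grad_inner_g .
  qed
  hence "fz k - a * expectation (\<lambda>\<omega>. f' (z_seq k \<omega>) \<bullet> g (Suc k) \<omega>)
      \<le> fz k - a * (gsq k / 2 - K\<^sup>2 * shift_coeff\<^sup>2 * msq k / 2)"
    using a_pos by (simp add: mult_left_mono)
  moreover have "K / 2 * a\<^sup>2 * expectation (\<lambda>\<omega>. (norm (g (Suc k) \<omega>))\<^sup>2) \<le> K / 2 * a\<^sup>2 * G\<^sup>2"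
    using g_second_moment_le[of "Suc k"] K_pos by (intro mult_left_mono) auto
  ultimately have "fz (Suc k) \<le> fz k - a * (gsq k / 2 - K\<^sup>2 * shift_coeff\<^sup>2 * msq k / 2) + K / 2 * a\<^sup>2 * G\<^sup>2"
    by linarith
  also have "\<dots> = fz k - e k / (2 * (1 - mu)) * gsq k
     + (e k / (2 * (1 - mu)) * K\<^sup>2 * shift_coeff\<^sup>2 * msq k + K / 2 * (e k / (1 - mu))\<^sup>2 * G\<^sup>2)"
    unfolding a_def by (simp add: algebra_simps)
  finally show ?thesis .
qed

lemma e_gsq_summable: "summable (\<lambda>k. e k * gsq k)" and fz_convergent: "convergent fz"
proof -
  have "summable (\<lambda>k. e k / (2 * (1 - mu)) * K\<^sup>2 * shift_coeff\<^sup>2 * msq k + K / 2 * (e k / (1 - mu))\<^sup>2 * G\<^sup>2)"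
  proof -
    have "summable (\<lambda>k. (e k * msq k) * (K\<^sup>2 * shift_coeff\<^sup>2 / (2 * (1 - mu)))
        + (e k)\<^sup>2 * (K / 2 * G\<^sup>2 / (1 - mu)\<^sup>2))"
      using e_msq_summable e_sq_summable
      by (intro summable_add summable_mult2)
    thus ?thesis by (simp add: field_simps power2_eq_square)
  qed
  note descent = perturbed_descent_summable_convergent[OF fz_Suc_le _ _ this fz_lower]
  have nonneg: "0 \<le> e k / (2 * (1 - mu)) * gsq k"
    "0 \<le> e k / (2 * (1 - mu)) * K\<^sup>2 * shift_coeff\<^sup>2 * msq k + K / 2 * (e k / (1 - mu))\<^sup>2 * G\<^sup>2" for k
    using e_pos[of k] mu_less_1 gsq_nonneg[of k] msq_nonneg[of k] K_pos by auto
  show "convergent fz" by (rule descent(2)[OF nonneg])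
  have "summable (\<lambda>k. e k / (2 * (1 - mu)) * gsq k * (2 * (1 - mu)))"
    by (intro summable_mult2 descent(1)[OF nonneg])
  thus "summable (\<lambda>k. e k * gsq k)" using mu_less_1 by simp
qed

lemma gnorm_Suc_diff_le: "\<bar>gnorm (Suc k) - gnorm k\<bar> \<le> K * (\<bar>G\<bar> + 1) / (1 - mu) * e k"
proof -
  define a where "a = e k / (1 - mu)"
  have a_pos: "a > 0" unfolding a_def using e_pos[of k] mu_less_1 by simp
  have g: "square_integrable M (g (Suc k))" by (rule g_square_integrable) simp
  have "gnorm (Suc k) - gnorm k
      = expectation (\<lambda>\<omega>. norm (f' (z_seq (Suc k) \<omega>)) - norm (f' (z_seq k \<omega>)))"
    unfolding gnorm_def
    using square_integrable_integrable_norm[OF square_integrable_f'[OF z_seq_square_integrable]]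
    by simp
  also have "\<bar>\<dots>\<bar> \<le> expectation (\<lambda>\<omega>. K * a * norm (g (Suc k) \<omega>))"
  proof (rule abs_expectation_le)
    show "integrable M (\<lambda>\<omega>. K * a * norm (g (Suc k) \<omega>))"
      using square_integrable_integrable_norm[OF g] by simp
    fix \<omega>
    have "\<bar>norm (f' (z_seq (Suc k) \<omega>)) - norm (f' (z_seq k \<omega>))\<bar>
        \<le> norm (f' (z_seq (Suc k) \<omega>) - f' (z_seq k \<omega>))"
      by (rule norm_triangle_ineq3)
    also have "\<dots> \<le> K * norm (z_seq (Suc k) \<omega> - z_seq k \<omega>)" by (rule lipschitz_K)
    also have "\<dots> = K * a * norm (g (Suc k) \<omega>)"
      unfolding z_seq_Suc a_def using e_pos[of k] mu_less_1 by simp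
    finally show "\<bar>norm (f' (z_seq (Suc k) \<omega>)) - norm (f' (z_seq k \<omega>))\<bar> \<le> K * a * norm (g (Suc k) \<omega>)" .
  qed simp
  also have "\<dots> = K * a * expectation (\<lambda>\<omega>. norm (g (Suc k) \<omega>))" by simp
  also have "\<dots> \<le> K * a * (\<bar>G\<bar> + 1)"
    using g_first_moment_le[of "Suc k"] K_pos a_pos by (intro mult_left_mono) auto
  finally show ?thesis unfolding a_def by (simp add: ac_simps)
qed

lemma gnorm_tendsto_zero: "gnorm \<longlonglongrightarrow> 0"
proof (rule weighted_sq_summable_tendsto_zero[OF e_pos])
  show "\<not> summable e" using eta_not_summable unfolding e_def[abs_def] .
  show "summable (\<lambda>k. e k * (gnorm k)\<^sup>2)"
  proof (rule summable_comparison_test'[OF e_gsq_summable, where N=0])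
    fix k
    have Z: "square_integrable M (\<lambda>\<omega>. f' (z_seq k \<omega>))"
      by (rule square_integrable_f'[OF z_seq_square_integrable])
    have "(gnorm k)\<^sup>2 \<le> gsq k"
      unfolding gnorm_def gsq_def
      using expectation_square_le[of "\<lambda>\<omega>. norm (f' (z_seq k \<omega>))"]
        square_integrable_integrable_norm[OF Z] square_integrableD(2)[OF Z] by simp
    thus "norm (e k * (gnorm k)\<^sup>2) \<le> e k * gsq k" using e_pos[of k] by (simp add: mult_left_mono)
  qed
  show "0 < K * (\<bar>G\<bar> + 1) / (1 - mu)" using K_pos mu_less_1 by (simp add: add_pos_nonneg)
qed (use gnorm_nonneg gnorm_Suc_diff_le in auto)

lemma grad_x_seq_tendsto_zero: "(\<lambda>k. expectation (\<lambda>\<omega>. norm (f' (x_seq k \<omega>)))) \<longlonglongrightarrow> 0"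
proof (rule tendsto_sandwich[where f="\<lambda>k. 0" and h="\<lambda>k. gnorm k + K * \<bar>shift_coeff\<bar> * sqrt (msq k)"])
  show "\<forall>\<^sub>F k in sequentially. 0 \<le> expectation (\<lambda>\<omega>. norm (f' (x_seq k \<omega>)))"
    by (intro always_eventually allI integral_nonneg_AE) auto
  have "expectation (\<lambda>\<omega>. norm (f' (x_seq k \<omega>))) \<le> gnorm k + K * \<bar>shift_coeff\<bar> * sqrt (msq k)" for k
  proof -
    have X: "square_integrable M (\<lambda>\<omega>. f' (x_seq k \<omega>))"
      by (rule square_integrable_f'[OF x_seq_square_integrable])
    have Z: "square_integrable M (\<lambda>\<omega>. f' (z_seq k \<omega>))"
      by (rule square_integrable_f'[OF z_seq_square_integrable])
    note integrable_m = square_integrable_integrable_norm[OF m_seq_square_integrable]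
    have "norm (f' (x_seq k \<omega>)) \<le> norm (f' (z_seq k \<omega>)) + K * \<bar>shift_coeff\<bar> * norm (m_seq k \<omega>)" for \<omega>
      using norm_triangle_sub[of "f' (x_seq k \<omega>)" "f' (z_seq k \<omega>)"]
        lipschitz_K[of "x_seq k \<omega>" "z_seq k \<omega>"] unfolding x_seq_eq by (simp add: mult.assoc)
    hence "expectation (\<lambda>\<omega>. norm (f' (x_seq k \<omega>)))
        \<le> expectation (\<lambda>\<omega>. norm (f' (z_seq k \<omega>)) + K * \<bar>shift_coeff\<bar> * norm (m_seq k \<omega>))"
      using square_integrable_integrable_norm[OF X] square_integrable_integrable_norm[OF Z] integrable_m
      by (intro integral_mono) auto
    also have "\<dots> = gnorm k + K * \<bar>shift_coeff\<bar> * expectation (\<lambda>\<omega>. norm (m_seq k \<omega>))"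
      unfolding gnorm_def using square_integrable_integrable_norm[OF Z] integrable_m by simp
    also have "\<dots> \<le> gnorm k + K * \<bar>shift_coeff\<bar> * sqrt (msq k)"
      unfolding msq_def using expectation_norm_le_sqrt[OF m_seq_square_integrable] K_pos
      by (intro add_left_mono mult_left_mono) auto
    finally show ?thesis .
  qed
  thus "\<forall>\<^sub>F k in sequentially.
      expectation (\<lambda>\<omega>. norm (f' (x_seq k \<omega>))) \<le> gnorm k + K * \<bar>shift_coeff\<bar> * sqrt (msq k)"
    by simp
  have "(\<lambda>k. gnorm k + K * \<bar>shift_coeff\<bar> * sqrt (msq k)) \<longlonglongrightarrow> 0 + K * \<bar>shift_coeff\<bar> * sqrt 0"
    by (intro tendsto_intros gnorm_tendsto_zero summable_LIMSEQ_zero[OF msq_summable])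
  thus "(\<lambda>k. gnorm k + K * \<bar>shift_coeff\<bar> * sqrt (msq k)) \<longlonglongrightarrow> 0" by simp
qed simp

lemma f_x_seq_z_seq_diff_le:
  assumes s: "s > 0"
  shows "\<bar>f (x_seq k \<omega>) - f (z_seq k \<omega>)\<bar>
    \<le> \<bar>shift_coeff\<bar> * s / 2 * (norm (f' (z_seq k \<omega>)))\<^sup>2
       + (\<bar>shift_coeff\<bar> / (2 * s) + K / 2 * shift_coeff\<^sup>2) * (norm (m_seq k \<omega>))\<^sup>2"
proof -
  let ?p = "f' (z_seq k \<omega>)" and ?m = "m_seq k \<omega>"
  define P Q where "P = (norm ?p)\<^sup>2" and "Q = (norm ?m)\<^sup>2"
  have d: "x_seq k \<omega> - z_seq k \<omega> = - (shift_coeff *\<^sub>R ?m)" unfolding x_seq_eq by simp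
  have "\<bar>f (x_seq k \<omega>) - f (z_seq k \<omega>) - ?p \<bullet> (x_seq k \<omega> - z_seq k \<omega>)\<bar>
      \<le> K / 2 * (\<bar>shift_coeff\<bar> * norm ?m)\<^sup>2"
    using remainder_le[of "x_seq k \<omega>" "z_seq k \<omega>"] unfolding d by simp
  hence remainder: "\<bar>f (x_seq k \<omega>) - f (z_seq k \<omega>) + shift_coeff * (?p \<bullet> ?m)\<bar>
      \<le> K / 2 * shift_coeff\<^sup>2 * Q"
    unfolding d Q_def by (simp add: power_mult_distrib)
  have "\<bar>shift_coeff * (?p \<bullet> ?m)\<bar> \<le> \<bar>shift_coeff\<bar> * (norm ?p * norm ?m)"
    unfolding abs_mult by (intro mult_left_mono Cauchy_Schwarz_ineq2) simp
  also have "\<dots> \<le> \<bar>shift_coeff\<bar> * (s * P / 2 + Q / (2 * s))"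
    unfolding P_def Q_def by (intro mult_left_mono young_ineq_weighted s) simp
  also have "\<dots> = \<bar>shift_coeff\<bar> * s / 2 * P + \<bar>shift_coeff\<bar> / (2 * s) * Q"
    by (simp add: algebra_simps)
  finally show ?thesis using remainder unfolding P_def[symmetric] Q_def[symmetric] distrib_right
    by linarith
qed

lemma f_x_seq_fz_diff_le:
  assumes s: "s > 0"
  shows "\<bar>expectation (\<lambda>\<omega>. f (x_seq k \<omega>)) - fz k\<bar>
    \<le> \<bar>shift_coeff\<bar> * s / 2 * gsq k + (\<bar>shift_coeff\<bar> / (2 * s) + K / 2 * shift_coeff\<^sup>2) * msq k"
proof -
  have Z: "square_integrable M (\<lambda>\<omega>. f' (z_seq k \<omega>))"
    by (rule square_integrable_f'[OF z_seq_square_integrable])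
  note i1 = square_integrableD(2)[OF Z] and i2 = square_integrableD(2)[OF m_seq_square_integrable]
  have "\<bar>expectation (\<lambda>\<omega>. f (x_seq k \<omega>)) - fz k\<bar>
      = \<bar>expectation (\<lambda>\<omega>. f (x_seq k \<omega>) - f (z_seq k \<omega>))\<bar>"
    unfolding fz_def
    using integrable_f[OF x_seq_square_integrable] integrable_f[OF z_seq_square_integrable] by simp
  also have "\<dots> \<le> expectation (\<lambda>\<omega>. \<bar>shift_coeff\<bar> * s / 2 * (norm (f' (z_seq k \<omega>)))\<^sup>2
      + (\<bar>shift_coeff\<bar> / (2 * s) + K / 2 * shift_coeff\<^sup>2) * (norm (m_seq k \<omega>))\<^sup>2)"
  proof (rule abs_expectation_le[OF _ _ f_x_seq_z_seq_diff_le[OF s]])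
    show "(\<lambda>\<omega>. f (x_seq k \<omega>) - f (z_seq k \<omega>)) \<in> borel_measurable M" by measurable
  qed (use i1 i2 in simp)
  also have "\<dots> = \<bar>shift_coeff\<bar> * s / 2 * gsq k + (\<bar>shift_coeff\<bar> / (2 * s) + K / 2 * shift_coeff\<^sup>2) * msq k"
    unfolding gsq_def msq_def using i1 i2 by simp
  finally show ?thesis .
qed

lemma f_x_seq_minus_fz_tendsto_zero: "(\<lambda>k. expectation (\<lambda>\<omega>. f (x_seq k \<omega>)) - fz k) \<longlonglongrightarrow> 0"
proof -
  obtain B where B: "\<And>k. norm (fz k) \<le> B"
    using BseqD[OF convergent_imp_Bseq[OF fz_convergent]] by blast
  have gsq_bounded: "gsq k \<le> 2 * K * (B + \<bar>fstar\<bar>)" for k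
  proof -
    have "2 * K * (fz k - fstar) \<le> 2 * K * (B + \<bar>fstar\<bar>)"
      using B[of k] K_pos by (intro mult_left_mono) auto
    thus ?thesis using gsq_le[of k] by linarith
  qed
  text \<open>Young's inequality with a weight s k that tends to 0 more slowly than msq k.\<close>
  define s where "s k = sqrt (msq k) + inverse (real (Suc k))" for k
  have s_pos: "s k > 0" for k unfolding s_def using msq_nonneg[of k] by (simp add: add_nonneg_pos)
  have msq_le: "msq k / s k \<le> s k" for k
  proof -
    have "msq k \<le> (s k)\<^sup>2"
      using real_sqrt_le_iff[of "msq k" "(s k)\<^sup>2"] s_pos[of k] unfolding s_def by simp
    thus ?thesis using s_pos[of k] by (simp add: divide_le_eq power2_eq_square)
  qed
  define bound where "bound k = \<bar>shift_coeff\<bar> * s k / 2 * (2 * K * (B + \<bar>fstar\<bar>))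
      + \<bar>shift_coeff\<bar> / 2 * s k + K / 2 * shift_coeff\<^sup>2 * msq k" for k
  have bounded: "\<bar>expectation (\<lambda>\<omega>. f (x_seq k \<omega>)) - fz k\<bar> \<le> bound k" for k
  proof -
    have "\<bar>shift_coeff\<bar> * s k / 2 * gsq k \<le> \<bar>shift_coeff\<bar> * s k / 2 * (2 * K * (B + \<bar>fstar\<bar>))"
      by (intro mult_left_mono gsq_bounded) (use s_pos[of k] in simp)
    moreover have "\<bar>shift_coeff\<bar> / (2 * s k) * msq k \<le> \<bar>shift_coeff\<bar> / 2 * s k"
    proof -
      have "\<bar>shift_coeff\<bar> / (2 * s k) * msq k = \<bar>shift_coeff\<bar> / 2 * (msq k / s k)" by simp
      also have "\<dots> \<le> \<bar>shift_coeff\<bar> / 2 * s k" by (intro mult_left_mono msq_le) simp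
      finally show ?thesis .
    qed
    ultimately show ?thesis
      using f_x_seq_fz_diff_le[OF s_pos[of k], of k] unfolding bound_def distrib_right by linarith
  qed
  have msq_lim: "msq \<longlonglongrightarrow> 0" by (rule summable_LIMSEQ_zero[OF msq_summable])
  have "s \<longlonglongrightarrow> sqrt 0 + 0"
    unfolding s_def[abs_def] by (intro tendsto_intros msq_lim LIMSEQ_inverse_real_of_nat)
  hence s_lim: "s \<longlonglongrightarrow> 0" by simp
  have "bound \<longlonglongrightarrow> \<bar>shift_coeff\<bar> * 0 / 2 * (2 * K * (B + \<bar>fstar\<bar>))
      + \<bar>shift_coeff\<bar> / 2 * 0 + K / 2 * shift_coeff\<^sup>2 * 0"
    unfolding bound_def[abs_def] by (intro tendsto_intros msq_lim s_lim) simp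
  hence "bound \<longlonglongrightarrow> 0" by simp
  have "(\<lambda>k. \<bar>expectation (\<lambda>\<omega>. f (x_seq k \<omega>)) - fz k\<bar>) \<longlonglongrightarrow> 0"
  proof (rule tendsto_sandwich[where f="\<lambda>k. 0" and h=bound])
    show "\<forall>\<^sub>F k in sequentially. \<bar>expectation (\<lambda>\<omega>. f (x_seq k \<omega>)) - fz k\<bar> \<le> bound k"
      using bounded by simp
  qed (use \<open>bound \<longlonglongrightarrow> 0\<close> in simp_all)
  thus ?thesis by (simp add: tendsto_rabs_zero_iff)
qed

lemma f_x_seq_convergent: "convergent (\<lambda>k. expectation (\<lambda>\<omega>. f (x_seq k \<omega>)))"
proof -
  obtain F where "fz \<longlonglongrightarrow> F" using fz_convergent by (auto simp: convergent_def)
  hence "(\<lambda>k. (expectation (\<lambda>\<omega>. f (x_seq k \<omega>)) - fz k) + fz k) \<longlonglongrightarrow> 0 + F"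
    by (intro tendsto_add f_x_seq_minus_fz_tendsto_zero)
  thus ?thesis by (auto simp: convergent_def)
qed

end

theorem theorem3p1:
  fixes M :: "'a measure"
    and f :: "'v::euclidean_space \<Rightarrow> real" and f' :: "'v \<Rightarrow> 'v"
    and L fstar mu lam G :: real
    and eta :: "nat \<Rightarrow> real"
    and x1 :: 'v
    and g :: "nat \<Rightarrow> 'a \<Rightarrow> 'v"
  assumes "prob_space M"
    and grad: "\<And>x. (f has_derivative (\<lambda>h. f' x \<bullet> h)) (at x)"
    and lip: "\<And>x y. norm (f' x - f' y) \<le> L * norm (x - y)"
    and lower: "\<And>x. fstar \<le> f x"
    and mu: "0 \<le> mu" "mu < 1"
    and lam: "0 \<le> lam" "lam \<le> 1 / (1 - mu)"
    and eta_pos: "\<And>t. t \<ge> 1 \<Longrightarrow> eta t > 0"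
    and eta_div: "\<not> summable (\<lambda>t. eta (Suc t))"
    and eta_sq: "summable (\<lambda>t. (eta (Suc t))\<^sup>2)"
    and eta_ratio: "(\<lambda>t. eta t / eta (Suc t)) \<longlonglongrightarrow> 1"
    and g_meas: "\<And>t. t \<ge> 1 \<Longrightarrow> g t \<in> borel_measurable M"
    and unbiased: "\<And>t b. t \<ge> 1 \<Longrightarrow> b \<in> Basis \<Longrightarrow>
        AE \<omega> in M. real_cond_exp M (hist M g t) (\<lambda>\<omega>. g t \<omega> \<bullet> b) \<omega>
                   = f' (sum_x mu lam eta x1 (\<lambda>i. g i \<omega>) t) \<bullet> b"
    and second_moment: "\<And>t. t \<ge> 1 \<Longrightarrow>
        (\<integral>\<^sup>+ \<omega>. ennreal ((norm (g t \<omega>))\<^sup>2) \<partial>M) \<le> ennreal (G\<^sup>2)"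
  shows "(\<forall>t. integrable M (\<lambda>\<omega>. norm (f' (sum_x mu lam eta x1 (\<lambda>i. g i \<omega>) t))))
       \<and> ((\<lambda>t. \<integral>\<omega>. norm (f' (sum_x mu lam eta x1 (\<lambda>i. g i \<omega>) t)) \<partial>M) \<longlonglongrightarrow> 0)
       \<and> (\<forall>t. integrable M (\<lambda>\<omega>. f (sum_x mu lam eta x1 (\<lambda>i. g i \<omega>) t)))
       \<and> (\<exists>Fstar::real. (\<lambda>t. \<integral>\<omega>. f (sum_x mu lam eta x1 (\<lambda>i. g i \<omega>) t) \<partial>M) \<longlonglongrightarrow> Fstar)"
proof -
  interpret sum_setting M f f' L fstar mu lam G eta x1 g
    by (rule sum_setting.intro[OF assms(1)], rule sum_setting_axioms.intro)
       (fact grad lip lower mu eta_pos eta_div eta_sq g_meas unbiased second_moment)+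
  have shift_index: "(\<lambda>t. u (t - 1)) \<longlonglongrightarrow> l" if "u \<longlonglongrightarrow> l" for u :: "nat \<Rightarrow> real" and l
    using that by (subst filterlim_sequentially_Suc[symmetric]) simp
  obtain F where "(\<lambda>k. expectation (\<lambda>\<omega>. f (x_seq k \<omega>))) \<longlonglongrightarrow> F"
    using f_x_seq_convergent by (auto simp: convergent_def)
  thus ?thesis
    unfolding sum_x_eq_x_seq
    using square_integrable_integrable_norm[OF square_integrable_f'[OF x_seq_square_integrable]]
      integrable_f[OF x_seq_square_integrable] shift_index[OF grad_x_seq_tendsto_zero]
      shift_index
    by blast
qed

end
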